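(* Let $n,d\in\mathbb N$, $d\ge2$, $u\in\mathcal U^n(\mathbb R)$, and $F:=\mathcal I_d[\mathrm{abs}*u]$. Then $F$ is even, convex, positive and $(n+2)$-times continuously differentiable, and $$F(s)=C_d|s|+\mathcal O(1/s)\quad (s\to\infty),\qquad C_d:=\frac{\Gamma(d/2)}{\sqrt\pi\,\Gamma(\frac{d+1}{2})}.$$ In particular $F-C_d\,\mathrm{abs}\in\mathcal C_0(\mathbb R)\cap L^2(\mathbb R)$, and $F'$ is bounded and continuous with $F'(0)=0$. Moreover, with $u_\varepsilon(x)=\varepsilon^{-1}u(x/\varepsilon)$ and $F^\varepsilon:=\mathcal I_d[\mathrm{abs}*u_\varepsilon]$, one has $\|F^\varepsilon-C_d\,\mathrm{abs}\|_{L^2(\mathbb R)}\to0$ and $F^\varepsilon(s)\to C_d|s|$ for every $s\in\mathbb R$ as $\varepsilon\to0$.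
   Context: $\mathrm{abs}(x)=|x|$. $\mathcal U^n(\mathbb R):=\{u\in\mathcal C^n_c(\mathbb R):u\ge0,\ \hat u\ge0,\ u\text{ even},\ \int u=1\}$ with $\hat u(\omega)=\int e^{-2\pi ix\omega}u(x)\mathrm dx$. $\mathcal I_d[f](s):=c_d\int_0^1f(ts)(1-t^2)^{\frac{d-3}{2}}\mathrm dt$ with $c_d:=2w_{d-2}/w_{d-1}$, $w_{d-1}:=2\pi^{d/2}/\Gamma(d/2)$. $\mathcal C_0(\mathbb R)$: continuous functions vanishing at infinity. *)

theory Defs
  imports "HOL-Analysis.Analysis" "HOL-Library.Landau_Symbols"
begin

definition Ck :: "nat \<Rightarrow> (real \<Rightarrow> real) \<Rightarrow> bool" where
  "Ck k f \<longleftrightarrow> (\<forall>j<k. \<forall>x. ((deriv ^^ j) f) differentiable (at x)) \<and>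
               (\<forall>j\<le>k. continuous_on UNIV ((deriv ^^ j) f))"

definition fourier :: "(real \<Rightarrow> real) \<Rightarrow> real \<Rightarrow> complex" where
  "fourier u w = (LINT x|lborel. cis (- 2 * pi * x * w) * complex_of_real (u x))"

definition U_class :: "nat \<Rightarrow> (real \<Rightarrow> real) set" where
  "U_class n = {u. Ck n u \<and> compact (closure {x. u x \<noteq> 0})
      \<and> (\<forall>x. u x \<ge> 0)
      \<and> (\<forall>w. fourier u w \<in> \<real> \<and> Re (fourier u w) \<ge> 0)
      \<and> (\<forall>x. u (- x) = u x)
      \<and> (LINT x|lborel. u x) = 1}"

definition abs_conv :: "(real \<Rightarrow> real) \<Rightarrow> real \<Rightarrow> real" where
  "abs_conv u x = (LINT y|lborel. \<bar>x - y\<bar> * u y)"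

text \<open>w_{d-1} = 2 pi^{d/2} / Gamma(d/2), written as a function of the real d.\<close>
definition wsph :: "real \<Rightarrow> real" where
  "wsph d = 2 * pi powr (d / 2) / Gamma (d / 2)"

definition c_const :: "nat \<Rightarrow> real" where
  "c_const d = 2 * wsph (real d - 1) / wsph (real d)"

definition I_op :: "nat \<Rightarrow> (real \<Rightarrow> real) \<Rightarrow> real \<Rightarrow> real" where
  "I_op d f s = c_const d *
     (LINT t:{0..1}|lborel. f (t * s) * (1 - t\<^sup>2) powr ((real d - 3) / 2))"

definition C_const :: "nat \<Rightarrow> real" where
  "C_const d = Gamma (real d / 2) / (sqrt pi * Gamma ((real d + 1) / 2))"

end

theory Submission
  imports Defs "HOL-Probability.Sinc_Integral"
begin

text \<open>Write \<open>w(t) = (1 - t\<^sup>2)\<^bsup>(d-3)/2\<^esup>\<close> and \<open>f = |\<cdot>| * u\<close>, so that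
  \<open>F(s) = c\<^sub>d \<integral>\<^sub>0\<^sup>1 f(t s) w(t) dt\<close>. If \<open>u\<close> is supported in \<open>(-r, r)\<close>, then \<open>f\<close> is even and
  convex, \<open>f' = 2 U - 1\<close> with \<open>U\<close> the distribution function of \<open>u\<close>, \<open>f'' = 2 u\<close>, and \<open>f(x) = |x|\<close>
  for \<open>|x| \<ge> r\<close>. Differentiating under the integral gives
  \<open>F\<^sup>(\<^sup>j\<^sup>)(s) = c\<^sub>d \<integral>\<^sub>0\<^sup>1 t\<^sup>j f\<^sup>(\<^sup>j\<^sup>)(t s) w(t) dt\<close>, so \<open>F\<close> inherits evenness, convexity,
  smoothness and a bounded derivative from \<open>f\<close>. Since \<open>c\<^sub>d \<integral>\<^sub>0\<^sup>1 t w(t) dt = C\<^sub>d\<close>, the defect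
  \<open>F(s) - C\<^sub>d |s|\<close> is the same average of \<open>f - |\<cdot>|\<close>, to which only \<open>t < r / |s|\<close>
  contributes; this gives the \<open>O(1/s)\<close> decay and square integrability. Finally
  \<open>F\<^sup>\<epsilon>(s) = \<epsilon> F(s / \<epsilon>)\<close>, so the \<open>L\<^sup>2\<close> norm of the defect of \<open>F\<^sup>\<epsilon>\<close> is \<open>\<epsilon>\<^sup>3\<^sup>/\<^sup>2\<close>
  times that of \<open>F\<close>.\<close>

section \<open>The radial weight\<close>

definition radial_weight :: "nat \<Rightarrow> real \<Rightarrow> real" where
  "radial_weight d t = (1 - t\<^sup>2) powr ((real d - 3) / 2)"

lemma radial_weight_nonneg: "radial_weight d t \<ge> 0"
  by (simp add: radial_weight_def)

lemma radial_weight_measurable [measurable]: "radial_weight d \<in> borel_measurable borel"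
  unfolding radial_weight_def by measurable

lemma has_integral_nonneg_imp_set_integrable:
  fixes f :: "real \<Rightarrow> real"
  assumes I: "(f has_integral I) S" and nonneg: "\<And>x. x \<in> S \<Longrightarrow> f x \<ge> 0"
    and [measurable]: "f \<in> borel_measurable borel" "S \<in> sets borel"
  shows "set_integrable lborel S f" "(LINT x:S|lborel. f x) = I"
proof -
  have "f absolutely_integrable_on S"
    using I nonneg by (intro nonnegative_absolutely_integrable_1) (auto simp: integrable_on_def)
  moreover have "(\<lambda>x. indicator S x *\<^sub>R f x) \<in> borel_measurable lborel"
    by measurable
  ultimately show si: "set_integrable lborel S f"
    using integrable_completion[of "\<lambda>x. indicator S x *\<^sub>R f x" lborel] unfolding set_integrable_def by simp
  show "(LINT x:S|lborel. f x) = I"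
    using set_borel_integral_eq_integral(2)[OF si] I by (simp add: integral_unique)
qed

lemma has_integral_times_radial_weight:
  assumes d: "d \<ge> 2"
  shows "((\<lambda>t. t * radial_weight d t) has_integral 1 / (real d - 1)) {0..1}"
proof -
  define p where "p = (real d - 1) / 2"
  have p: "p > 0" using d by (simp add: p_def)
  define \<Phi> where "\<Phi> t = - ((1 - t\<^sup>2) powr p) / (real d - 1)" for t
  have "((\<lambda>t. t * radial_weight d t) has_integral (\<Phi> 1 - \<Phi> 0)) {0..1}"
  proof (rule fundamental_theorem_of_calculus_interior_strong[where S="{}"])
    show "continuous_on {0..1} \<Phi>" unfolding \<Phi>_def
      using p d by (intro continuous_on_divide continuous_on_minus continuous_on_powr' continuous_intros)
        (auto simp: abs_square_le_1)
    fix x :: real assume x: "x \<in> {0<..<1} - {}"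
    then have x2: "x\<^sup>2 < 1" by (simp add: abs_square_less_1)
    have "((\<lambda>t. (1 - t\<^sup>2) powr p) has_real_derivative p * (1 - x\<^sup>2) powr (p - 1) * (- (2 * x))) (at x)"
      by (rule DERIV_fun_powr[of _ _ x, simplified]) (auto intro!: derivative_eq_intros simp: x2)
    then have "(\<Phi> has_real_derivative - (p * (1 - x\<^sup>2) powr (p - 1) * (- (2 * x))) / (real d - 1)) (at x)"
      unfolding \<Phi>_def by (intro DERIV_cdivide DERIV_minus)
    moreover have "p - 1 = (real d - 3) / 2" "2 * p / (real d - 1) = 1"
      using d by (simp_all add: p_def field_simps)
    ultimately have "(\<Phi> has_real_derivative (2 * p / (real d - 1)) * (x * radial_weight d x)) (at x)"
      by (simp add: radial_weight_def algebra_simps)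
    then show "(\<Phi> has_vector_derivative x * radial_weight d x) (at x)"
      by (simp add: has_real_derivative_iff_has_vector_derivative \<open>2 * p / (real d - 1) = 1\<close>)
  qed auto
  moreover have "\<Phi> 1 - \<Phi> 0 = 1 / (real d - 1)" using p by (simp add: \<Phi>_def)
  ultimately show ?thesis by simp
qed

lemma
  assumes "d \<ge> 2"
  shows set_integrable_times_radial_weight: "set_integrable lborel {0..1} (\<lambda>t. t * radial_weight d t)"
    and set_integral_times_radial_weight: "(LINT t:{0..1}|lborel. t * radial_weight d t) = 1 / (real d - 1)"
  using has_integral_nonneg_imp_set_integrable[OF has_integral_times_radial_weight[OF assms]]
  by (auto simp: radial_weight_nonneg)

lemma radial_weight_le_2:
  assumes d: "d \<ge> 2" and t: "0 \<le> t" "t \<le> 1/2"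
  shows "radial_weight d t \<le> 2"
proof -
  have "t\<^sup>2 \<le> 1/4" using t power_mono[of t "1/2" 2] by (simp add: power_divide)
  then have b: "3/4 \<le> 1 - t\<^sup>2" "1 - t\<^sup>2 \<le> 1" by auto
  show ?thesis
  proof (cases "d = 2")
    case True
    then have "radial_weight d t = (1 - t\<^sup>2) powr (- (1/2))" by (simp add: radial_weight_def)
    also have "\<dots> \<le> (3/4) powr (-(1/2))"
      using b by (intro powr_mono2') auto
    also have "\<dots> = inverse (sqrt (3/4))" by (simp add: powr_minus powr_half_sqrt)
    also have "\<dots> \<le> 2"
    proof -
      have "1/2 \<le> sqrt (3/4)"
        using real_sqrt_le_mono[of "1/4" "3/4"] by (simp add: real_sqrt_divide)
      from le_imp_inverse_le[OF this] show ?thesis by simp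
    qed
    finally show ?thesis .
  next
    case False
    then have "radial_weight d t \<le> 1 powr ((real d - 3) / 2)"
      unfolding radial_weight_def using b d by (intro powr_mono2) auto
    then show ?thesis by simp
  qed
qed

text \<open>Near \<open>t = 1\<close> the weight is dominated by \<open>2 t w(t)\<close>, near \<open>t = 0\<close> by the constant \<open>2\<close>.\<close>
lemma set_integrable_radial_weight:
  assumes d: "d \<ge> 2"
  shows "set_integrable lborel {0..1} (radial_weight d)"
proof -
  have "set_integrable lborel {0..1} (\<lambda>t. 2 + 2 * (t * radial_weight d t))"
    by (intro set_integral_add set_integrable_mult_right set_integrable_times_radial_weight[OF d])
       (simp add: set_integrable_def integrable_mult_left)
  then show ?thesis
  proof (rule set_integrable_bound)
    show "set_borel_measurable lborel {0..1} (radial_weight d)"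
      unfolding set_borel_measurable_def by measurable
    show "AE x in lborel. x \<in> {0..1} \<longrightarrow> norm (radial_weight d x) \<le> norm (2 + 2 * (x * radial_weight d x))"
    proof (intro AE_I2 impI)
      fix x :: real assume x: "x \<in> {0..1}"
      have nn: "0 \<le> x * radial_weight d x" "0 \<le> radial_weight d x"
        using x radial_weight_nonneg by simp_all
      have "radial_weight d x \<le> 2 + 2 * (x * radial_weight d x)"
      proof (cases "x \<le> 1/2")
        case True
        then have "radial_weight d x \<le> 2" using radial_weight_le_2[OF d, of x] x by simp
        then show ?thesis using nn(1) by linarith
      next
        case False
        then show ?thesis using nn mult_right_mono[of "1/2" x "radial_weight d x"] by auto
      qed
      then show "norm (radial_weight d x) \<le> norm (2 + 2 * (x * radial_weight d x))"
        using nn by simp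
    qed
  qed
qed

lemma set_integral_radial_weight_pos:
  assumes d: "d \<ge> 2"
  shows "(LINT t:{0..1}|lborel. radial_weight d t) > 0"
proof -
  have "1 / (real d - 1) \<le> (LINT t:{0..1}|lborel. radial_weight d t)"
    unfolding set_integral_times_radial_weight[OF d, symmetric]
    by (rule set_integral_mono[OF set_integrable_times_radial_weight[OF d] set_integrable_radial_weight[OF d]])
      (auto simp: radial_weight_nonneg mult_left_le_one_le)
  moreover have "1 / (real d - 1) > 0" using d by simp
  ultimately show ?thesis by linarith
qed

lemma
  assumes d: "d \<ge> 2"
  shows c_const_pos: "c_const d > 0"
    and C_const_eq: "C_const d = c_const d / (real d - 1)"
proof -
  define z where "z = (real d - 1) / 2"
  have z: "z > 0" using d by (simp add: z_def)
  have Gamma_d: "Gamma ((real d + 1) / 2) = z * Gamma z"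
  proof -
    have "z \<notin> \<int>\<^sub>\<le>\<^sub>0" using z nonpos_Ints_nonpos by force
    moreover have "z + 1 = (real d + 1) / 2" by (simp add: z_def field_simps)
    ultimately show ?thesis using Gamma_plus1 by metis
  qed
  have "pi powr (real d / 2) = pi powr z * sqrt pi"
  proof -
    have e: "real d / 2 = z + 1/2" by (simp add: z_def field_simps)
    show ?thesis unfolding e by (simp add: powr_add powr_half_sqrt)
  qed
  then have w: "wsph (real d - 1) = 2 * pi powr z / Gamma z"
    "wsph (real d) = 2 * pi powr z * sqrt pi / Gamma (real d / 2)"
    by (simp_all add: wsph_def z_def)
  have pos: "Gamma z > 0" "Gamma (real d / 2) > 0" using z d by simp_all
  show "c_const d > 0" unfolding c_const_def w using pos by simp
  show "C_const d = c_const d / (real d - 1)"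
    unfolding C_const_def c_const_def w Gamma_d using pos z by (simp add: z_def field_simps)
qed

section \<open>Radial averages\<close>

definition radial_avg :: "(real \<Rightarrow> real) \<Rightarrow> (real \<Rightarrow> real) \<Rightarrow> real \<Rightarrow> real" where
  "radial_avg \<nu> g s = (LINT t:{0..1}|lborel. g (t * s) * \<nu> t)"

lemma I_op_eq_radial_avg: "I_op d f = (\<lambda>s. c_const d * radial_avg (radial_weight d) f s)"
  by (simp add: fun_eq_iff I_op_def radial_avg_def radial_weight_def)

lemma set_integrable_radial_avg:
  fixes g :: "real \<Rightarrow> real"
  assumes g: "continuous_on UNIV g" and \<nu>: "set_integrable lborel {0..1} \<nu>"
  shows "set_integrable lborel {0..1} (\<lambda>t. g (t * s) * \<nu> t)"
proof -
  have c: "continuous_on UNIV (\<lambda>t. g (t * s))"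
    by (rule continuous_on_compose2[OF g]) (simp_all add: continuous_intros)
  have "compact ((\<lambda>t. g (t * s)) ` {0..1})"
    by (rule compact_continuous_image[OF continuous_on_subset[OF c]]) auto
  then have "bounded ((\<lambda>t. g (t * s)) ` {0..1})" by (rule compact_imp_bounded)
  then obtain M where M: "\<And>t. t \<in> {0..1} \<Longrightarrow> \<bar>g (t * s)\<bar> \<le> M"
    unfolding bounded_iff by fastforce
  have "set_integrable lborel {0..1} (\<lambda>t. M * \<nu> t)" using \<nu> by simp
  then show ?thesis
  proof (rule set_integrable_bound)
    have "(\<lambda>t. indicator {0..1} t *\<^sub>R \<nu> t) \<in> borel_measurable lborel"
      using \<nu> unfolding set_integrable_def by (rule borel_measurable_integrable)
    moreover have "(\<lambda>t. g (t * s)) \<in> borel_measurable lborel"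
      by (intro borel_measurable_continuous_on[OF g]) measurable
    ultimately show "set_borel_measurable lborel {0..1} (\<lambda>t. g (t * s) * \<nu> t)"
      unfolding set_borel_measurable_def by (simp add: mult.left_commute)
    show "AE x in lborel. x \<in> {0..1} \<longrightarrow> norm (g (x * s) * \<nu> x) \<le> norm (M * \<nu> x)"
      using M by (intro AE_I2 impI) (fastforce simp: abs_mult intro: mult_right_mono)
  qed
qed

lemma set_integrable_power_mult:
  fixes \<nu> :: "real \<Rightarrow> real"
  assumes "set_integrable lborel {0..1} \<nu>"
  shows "set_integrable lborel {0..1} (\<lambda>t. t ^ j * \<nu> t)"
proof -
  have "continuous_on UNIV (\<lambda>x::real. x ^ j)" by (intro continuous_intros)
  from set_integrable_radial_avg[OF this assms, of 1] show ?thesis by simp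
qed

lemma abs_set_integral_le:
  fixes f g :: "real \<Rightarrow> real"
  assumes "set_integrable lborel A f" "set_integrable lborel A g" "\<And>t. t \<in> A \<Longrightarrow> \<bar>f t\<bar> \<le> g t"
  shows "\<bar>LINT t:A|lborel. f t\<bar> \<le> (LINT t:A|lborel. g t)"
  using assms unfolding set_integrable_def set_lebesgue_integral_def
  by (intro integral_abs_bound_integral) (auto split: split_indicator)

lemma abs_set_integral_le_uniform:
  fixes \<phi> \<nu> :: "real \<Rightarrow> real"
  assumes "set_integrable lborel A (\<lambda>t. \<phi> t * \<nu> t)" "set_integrable lborel A \<nu>"
    and "\<And>t. t \<in> A \<Longrightarrow> \<bar>\<phi> t\<bar> \<le> e"
  shows "\<bar>LINT t:A|lborel. \<phi> t * \<nu> t\<bar> \<le> e * (LINT t:A|lborel. \<bar>\<nu> t\<bar>)"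
proof -
  have "\<bar>LINT t:A|lborel. \<phi> t * \<nu> t\<bar> \<le> (LINT t:A|lborel. e * \<bar>\<nu> t\<bar>)"
    using assms set_integrable_abs[OF assms(2)]
    by (intro abs_set_integral_le) (auto simp: abs_mult intro: mult_right_mono)
  then show ?thesis by simp
qed

lemma set_integral_abs_nonneg: "0 \<le> (LINT t:A|M. \<bar>f t :: real\<bar>)"
  unfolding set_lebesgue_integral_def by (intro integral_nonneg_AE AE_I2) (simp split: split_indicator)

lemma uniformly_continuous_along_segment:
  fixes g :: "real \<Rightarrow> real"
  assumes g: "continuous_on UNIV g" and e: "e > 0"
  obtains \<delta> where "\<delta> > 0" "\<And>t z. t \<in> {0..1} \<Longrightarrow> \<bar>z - t * s0\<bar> < \<delta> \<Longrightarrow> \<bar>g z - g (t * s0)\<bar> < e"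
proof -
  have "uniformly_continuous_on (cball 0 (\<bar>s0\<bar> + 1)) g"
    by (intro compact_uniformly_continuous continuous_on_subset[OF g]) auto
  then obtain \<delta> where \<delta>: "\<delta> > 0"
    "\<And>x x'. x \<in> cball 0 (\<bar>s0\<bar> + 1) \<Longrightarrow> x' \<in> cball 0 (\<bar>s0\<bar> + 1) \<Longrightarrow> dist x' x < \<delta> \<Longrightarrow> dist (g x') (g x) < e"
    unfolding uniformly_continuous_on_def using e by metis
  show ?thesis
  proof (rule that[of "min \<delta> 1"])
    fix t z assume t: "t \<in> {0..1}" and z: "\<bar>z - t * s0\<bar> < min \<delta> 1"
    have "\<bar>t * s0\<bar> \<le> \<bar>s0\<bar>" using t by (simp add: abs_mult mult_left_le_one_le)
    then have "t * s0 \<in> cball 0 (\<bar>s0\<bar> + 1)" "z \<in> cball 0 (\<bar>s0\<bar> + 1)" using z by auto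
    then show "\<bar>g z - g (t * s0)\<bar> < e" using \<delta>(2) z by (force simp: dist_real_def)
  qed (use \<delta> in simp)
qed

lemma continuous_on_radial_avg:
  fixes g \<nu> :: "real \<Rightarrow> real"
  assumes g: "continuous_on UNIV g" and \<nu>: "set_integrable lborel {0..1} \<nu>"
  shows "continuous_on UNIV (radial_avg \<nu> g)"
  unfolding continuous_on_iff
proof (intro ballI allI impI)
  fix s0 r :: real assume r: "r > 0"
  define N where "N = (LINT t:{0..1}|lborel. \<bar>\<nu> t\<bar>)"
  have N: "N \<ge> 0" unfolding N_def by (rule set_integral_abs_nonneg)
  obtain \<delta> where \<delta>: "\<delta> > 0"
    and close: "\<And>t z. t \<in> {0..1} \<Longrightarrow> \<bar>z - t * s0\<bar> < \<delta> \<Longrightarrow> \<bar>g z - g (t * s0)\<bar> < r / (N + 1)"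
    using uniformly_continuous_along_segment[OF g, of "r / (N + 1)" s0] r N by auto
  show "\<exists>\<delta>>0. \<forall>s\<in>UNIV. dist s s0 < \<delta> \<longrightarrow> dist (radial_avg \<nu> g s) (radial_avg \<nu> g s0) < r"
  proof (intro exI[of _ \<delta>] conjI ballI impI)
    fix s assume "dist s s0 < \<delta>"
    then have "\<bar>g (t * s) - g (t * s0)\<bar> \<le> r / (N + 1)" if t: "t \<in> {0..1}" for t
    proof -
      have "\<bar>t * s - t * s0\<bar> \<le> \<bar>s - s0\<bar>"
        using t by (simp add: abs_mult mult_left_le_one_le flip: right_diff_distrib)
      then show ?thesis using close[OF t, of "t * s"] \<open>dist s s0 < \<delta>\<close> by (simp add: dist_real_def)
    qed
    moreover have int: "set_integrable lborel {0..1} (\<lambda>t. (g (t * s) - g (t * s0)) * \<nu> t)"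
      using set_integrable_radial_avg[OF g \<nu>] by (simp add: left_diff_distrib)
    moreover have "radial_avg \<nu> g s - radial_avg \<nu> g s0 = (LINT t:{0..1}|lborel. (g (t * s) - g (t * s0)) * \<nu> t)"
      unfolding radial_avg_def left_diff_distrib
      by (rule set_integral_diff(2)[symmetric]) (use set_integrable_radial_avg[OF g \<nu>] in auto)
    ultimately have "\<bar>radial_avg \<nu> g s - radial_avg \<nu> g s0\<bar> \<le> r / (N + 1) * N"
      unfolding N_def by (simp only:) (rule abs_set_integral_le_uniform[OF int \<nu>])
    also have "\<dots> < r" using r N by (simp add: field_simps)
    finally show "dist (radial_avg \<nu> g s) (radial_avg \<nu> g s0) < r" by (simp add: dist_real_def)
  qed (use \<delta> in simp)
qed

lemma first_order_remainder_le:
  fixes g g' :: "real \<Rightarrow> real"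
  assumes der: "\<And>x. (g has_real_derivative g' x) (at x)"
    and e: "\<And>z. \<bar>z - y\<bar> \<le> \<bar>h\<bar> \<Longrightarrow> \<bar>g' z - g' y\<bar> \<le> e"
  shows "\<bar>g (y + h) - g y - h * g' y\<bar> \<le> \<bar>h\<bar> * e"
proof -
  obtain z where zy: "\<bar>z - y\<bar> \<le> \<bar>h\<bar>" and z: "g (y + h) - g y = h * g' z"
  proof (cases h "0::real" rule: linorder_cases)
    case less
    from MVT2[of "y + h" y g g'] less der obtain z where "y + h < z" "z < y" "g y - g (y + h) = (- h) * g' z"
      by auto
    then show ?thesis using that[of z] by auto
  next
    case greater
    from MVT2[of y "y + h" g g'] greater der obtain z where "y < z" "z < y + h" "g (y + h) - g y = h * g' z"
      by auto
    then show ?thesis using that[of z] by auto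
  qed (use that[of y] in auto)
  from e[OF zy] have "\<bar>g' z - g' y\<bar> \<le> e" .
  then show ?thesis unfolding z by (simp add: abs_mult mult_left_mono flip: right_diff_distrib)
qed

lemma has_real_derivative_radial_avg:
  fixes g g' \<nu> :: "real \<Rightarrow> real"
  assumes der: "\<And>x. (g has_real_derivative g' x) (at x)"
    and g': "continuous_on UNIV g'" and \<nu>: "set_integrable lborel {0..1} \<nu>"
  shows "(radial_avg \<nu> g has_real_derivative radial_avg (\<lambda>t. t * \<nu> t) g' s0) (at s0)"
proof -
  have g: "continuous_on UNIV g"
    using der by (meson DERIV_isCont continuous_at_imp_continuous_on)
  have t\<nu>: "set_integrable lborel {0..1} (\<lambda>t. t * \<nu> t)"
    using set_integrable_power_mult[OF \<nu>, of 1] by simp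
  define N where "N = (LINT t:{0..1}|lborel. \<bar>\<nu> t\<bar>)"
  have N: "N \<ge> 0" unfolding N_def by (rule set_integral_abs_nonneg)
  define H where "H = radial_avg \<nu> g"
  define K where "K = radial_avg (\<lambda>t. t * \<nu> t) g' s0"
  have "((\<lambda>s. (H s - H s0) / (s - s0)) \<longlongrightarrow> K) (at s0)"
    unfolding LIM_eq
  proof (intro allI impI)
    fix r :: real assume r: "r > 0"
    obtain \<delta> where \<delta>: "\<delta> > 0"
      and close: "\<And>t z. t \<in> {0..1} \<Longrightarrow> \<bar>z - t * s0\<bar> < \<delta> \<Longrightarrow> \<bar>g' z - g' (t * s0)\<bar> < r / (N + 1)"
      using uniformly_continuous_along_segment[OF g', of "r / (N + 1)" s0] r N by auto
    show "\<exists>\<delta>>0. \<forall>s. s \<noteq> s0 \<and> norm (s - s0) < \<delta> \<longrightarrow> norm ((H s - H s0) / (s - s0) - K) < r"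
    proof (intro exI[of _ \<delta>] conjI allI impI)
      fix s assume s: "s \<noteq> s0 \<and> norm (s - s0) < \<delta>"
      define \<phi> where "\<phi> t = g (t * s) - g (t * s0) - (s - s0) * (g' (t * s0) * t)" for t
      have pointwise: "\<bar>\<phi> t\<bar> \<le> \<bar>s - s0\<bar> * (r / (N + 1))" if t: "t \<in> {0..1}" for t
      proof -
        have ht: "\<bar>t * (s - s0)\<bar> \<le> \<bar>s - s0\<bar>" using t by (simp add: abs_mult mult_left_le_one_le)
        have "\<bar>g (t * s0 + t * (s - s0)) - g (t * s0) - t * (s - s0) * g' (t * s0)\<bar>
            \<le> \<bar>t * (s - s0)\<bar> * (r / (N + 1))"
        proof (rule first_order_remainder_le[OF der])
          fix z assume "\<bar>z - t * s0\<bar> \<le> \<bar>t * (s - s0)\<bar>"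
          then have "\<bar>z - t * s0\<bar> < \<delta>" using ht s by simp
          then show "\<bar>g' z - g' (t * s0)\<bar> \<le> r / (N + 1)" using close[OF t] by fastforce
        qed
        then have "\<bar>\<phi> t\<bar> \<le> \<bar>t * (s - s0)\<bar> * (r / (N + 1))"
          by (simp add: \<phi>_def algebra_simps)
        also have "\<dots> \<le> \<bar>s - s0\<bar> * (r / (N + 1))"
          using ht r N by (intro mult_right_mono) auto
        finally show ?thesis .
      qed
      note ints = set_integrable_radial_avg[OF g \<nu>] set_integrable_radial_avg[OF g' t\<nu>, of s0]
      have \<phi>\<nu>: "(\<lambda>t. \<phi> t * \<nu> t)
          = (\<lambda>t. (g (t * s) * \<nu> t - g (t * s0) * \<nu> t) - (s - s0) * (g' (t * s0) * (t * \<nu> t)))"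
        by (simp add: fun_eq_iff \<phi>_def algebra_simps)
      have eq: "H s - H s0 - (s - s0) * K = (LINT t:{0..1}|lborel. \<phi> t * \<nu> t)"
      proof -
        have "(LINT t:{0..1}|lborel. \<phi> t * \<nu> t) = (LINT t:{0..1}|lborel. g (t * s) * \<nu> t - g (t * s0) * \<nu> t)
            - (LINT t:{0..1}|lborel. (s - s0) * (g' (t * s0) * (t * \<nu> t)))"
          unfolding \<phi>\<nu> using ints by (intro set_integral_diff(2)) auto
        also have "\<dots> = H s - H s0 - (s - s0) * K"
          unfolding H_def K_def radial_avg_def using ints by (simp add: set_integral_diff(2))
        finally show ?thesis by simp
      qed
      have int: "set_integrable lborel {0..1} (\<lambda>t. \<phi> t * \<nu> t)"
        unfolding \<phi>\<nu> using ints by auto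
      have bound: "\<bar>H s - H s0 - (s - s0) * K\<bar> \<le> \<bar>s - s0\<bar> * (r / (N + 1)) * N"
        using abs_set_integral_le_uniform[OF int \<nu> pointwise] unfolding eq N_def .
      have "(H s - H s0) / (s - s0) - K = (H s - H s0 - (s - s0) * K) / (s - s0)"
        using s by (simp add: field_simps)
      then have "norm ((H s - H s0) / (s - s0) - K) = \<bar>H s - H s0 - (s - s0) * K\<bar> / \<bar>s - s0\<bar>"
        by (simp add: abs_divide)
      also have "\<dots> \<le> \<bar>s - s0\<bar> * (r / (N + 1)) * N / \<bar>s - s0\<bar>"
        using bound by (rule divide_right_mono) simp
      also have "\<dots> = r / (N + 1) * N" using s by simp
      also have "\<dots> < r" using r N by (simp add: field_simps)
      finally show "norm ((H s - H s0) / (s - s0) - K) < r" .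
    qed (use \<delta> in simp)
  qed
  then show ?thesis unfolding has_field_derivative_iff H_def K_def .
qed

lemma radial_avg_mono:
  fixes g \<nu> :: "real \<Rightarrow> real"
  assumes "mono g" "continuous_on UNIV g" "set_integrable lborel {0..1} \<nu>"
    and "\<And>t. t \<in> {0..1} \<Longrightarrow> \<nu> t \<ge> 0" and "s \<le> s'"
  shows "radial_avg \<nu> g s \<le> radial_avg \<nu> g s'"
  unfolding radial_avg_def
proof (rule set_integral_mono)
  show "set_integrable lborel {0..1} (\<lambda>t. g (t * s) * \<nu> t)"
    "set_integrable lborel {0..1} (\<lambda>t. g (t * s') * \<nu> t)"
    using set_integrable_radial_avg assms(2,3) by blast+
  fix t :: real assume t: "t \<in> {0..1}"
  then have "g (t * s) \<le> g (t * s')" using assms(1,5) by (auto intro: monoD mult_left_mono)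
  then show "g (t * s) * \<nu> t \<le> g (t * s') * \<nu> t" using assms(4)[OF t] by (rule mult_right_mono)
qed

lemma radial_avg_ge:
  fixes g \<nu> :: "real \<Rightarrow> real"
  assumes "continuous_on UNIV g" "set_integrable lborel {0..1} \<nu>"
    and "\<And>t. t \<in> {0..1} \<Longrightarrow> \<nu> t \<ge> 0" and "\<And>x. m \<le> g x"
  shows "m * (LINT t:{0..1}|lborel. \<nu> t) \<le> radial_avg \<nu> g s"
proof -
  have "(LINT t:{0..1}|lborel. m * \<nu> t) \<le> radial_avg \<nu> g s"
    unfolding radial_avg_def using assms
    by (intro set_integral_mono set_integrable_radial_avg) (auto intro: mult_right_mono)
  then show ?thesis by simp
qed

lemma abs_radial_avg_le:
  fixes g \<nu> :: "real \<Rightarrow> real"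
  assumes "continuous_on UNIV g" "set_integrable lborel {0..1} \<nu>"
    and "\<And>t. t \<in> {0..1} \<Longrightarrow> \<nu> t \<ge> 0" and "\<And>x. \<bar>g x\<bar> \<le> M"
  shows "\<bar>radial_avg \<nu> g s\<bar> \<le> M * (LINT t:{0..1}|lborel. \<nu> t)"
proof -
  have "\<bar>radial_avg \<nu> g s\<bar> \<le> M * (LINT t:{0..1}|lborel. \<bar>\<nu> t\<bar>)"
    unfolding radial_avg_def using assms
    by (intro abs_set_integral_le_uniform set_integrable_radial_avg) auto
  also have "(LINT t:{0..1}|lborel. \<bar>\<nu> t\<bar>) = (LINT t:{0..1}|lborel. \<nu> t)"
    using assms(3) by (intro set_lebesgue_integral_cong) auto
  finally show ?thesis .
qed

text \<open>Only \<open>t \<le> \<rho> / s \<le> 1/2\<close> contributes, and there the weight is at most \<open>2\<close>.\<close>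
lemma abs_radial_avg_radial_weight_le:
  fixes h :: "real \<Rightarrow> real"
  assumes d: "d \<ge> 2" and h: "continuous_on UNIV h" and M: "\<And>x. \<bar>h x\<bar> \<le> M"
    and vanish: "\<And>x. x \<ge> \<rho> \<Longrightarrow> h x = 0" and \<rho>: "\<rho> > 0" and s: "s \<ge> 2 * \<rho>"
  shows "\<bar>radial_avg (radial_weight d) h s\<bar> \<le> 2 * M * \<rho> / s"
proof -
  define q where "q = \<rho> / s"
  have q: "0 \<le> q" "q \<le> 1/2" "q \<le> 1" using s \<rho> by (auto simp: q_def field_simps)
  have M0: "M \<ge> 0" using M[of 0] by linarith
  have box: "set_integrable lborel {0..1} (\<lambda>t. indicator {0..q} t * (2 * M))"
  proof -
    have "(\<lambda>t. indicator {0..1} t *\<^sub>R (indicator {0..q} t * (2 * M))) = (\<lambda>t. indicator {0..q} t *\<^sub>R (2 * M))"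
      using q by (auto simp: fun_eq_iff split: split_indicator)
    then show ?thesis
      using borel_integrable_atLeastAtMost'[of 0 q "\<lambda>_. 2 * M"] unfolding set_integrable_def by simp
  qed
  have box_integral: "(LINT t:{0..1}|lborel. indicator {0..q} t * (2 * M)) = 2 * M * q"
  proof -
    have "(LINT t:{0..1}|lborel. indicator {0..q} t * (2 * M)) = (LINT t:{0..q}|lborel. 2 * M)"
      unfolding set_lebesgue_integral_def
      using q by (intro Bochner_Integration.integral_cong) (auto split: split_indicator)
    also have "\<dots> = integral {0..q} (\<lambda>t. 2 * M)"
      by (rule set_borel_integral_eq_integral(2)) (rule borel_integrable_atLeastAtMost', simp)
    also have "\<dots> = 2 * M * q" using q by simp
    finally show ?thesis .
  qed
  have "\<bar>radial_avg (radial_weight d) h s\<bar> \<le> (LINT t:{0..1}|lborel. indicator {0..q} t * (2 * M))"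
    unfolding radial_avg_def
  proof (rule abs_set_integral_le)
    show "set_integrable lborel {0..1} (\<lambda>t. h (t * s) * radial_weight d t)"
      by (rule set_integrable_radial_avg[OF h set_integrable_radial_weight[OF d]])
    fix t :: real assume t: "t \<in> {0..1}"
    show "\<bar>h (t * s) * radial_weight d t\<bar> \<le> indicator {0..q} t * (2 * M)"
    proof (cases "t \<le> q")
      case True
      then have "\<bar>h (t * s)\<bar> * radial_weight d t \<le> M * 2"
        using radial_weight_le_2[OF d, of t] t q M[of "t * s"] radial_weight_nonneg[of d t] M0
        by (intro mult_mono) auto
      then show ?thesis using True t by (simp add: abs_mult radial_weight_nonneg)
    next
      case False
      then have "t * s \<ge> \<rho>" using s \<rho> by (simp add: q_def field_simps)
      then show ?thesis using M0 vanish by (simp add: indicator_def)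
    qed
  qed (rule box)
  then show ?thesis unfolding box_integral by (simp add: q_def)
qed

section \<open>Towers of derivatives\<close>

definition deriv_tower :: "nat \<Rightarrow> (nat \<Rightarrow> real \<Rightarrow> real) \<Rightarrow> bool" where
  "deriv_tower k g \<longleftrightarrow> (\<forall>j<k. \<forall>x. (g j has_real_derivative g (Suc j) x) (at x)) \<and>
     (\<forall>j\<le>k. continuous_on UNIV (g j))"

lemma deriv_tower_funpow_deriv:
  assumes "deriv_tower k g" "j \<le> k"
  shows "(deriv ^^ j) (g 0) = g j"
  using assms(2)
proof (induction j)
  case (Suc j)
  then have "(deriv ^^ Suc j) (g 0) = deriv (g j)" by simp
  also have "\<dots> = g (Suc j)"
    using assms(1) Suc.prems unfolding deriv_tower_def by (auto simp: fun_eq_iff intro: DERIV_imp_deriv)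
  finally show ?case .
qed simp

lemma deriv_tower_imp_Ck:
  assumes "deriv_tower k g" shows "Ck k (g 0)"
  using assms deriv_tower_funpow_deriv[OF assms]
  unfolding Ck_def deriv_tower_def by (auto simp: real_differentiable_def)

lemma Ck_imp_deriv_tower:
  assumes "Ck k u" shows "deriv_tower k (\<lambda>j. (deriv ^^ j) u)"
  using assms unfolding Ck_def deriv_tower_def
  by (auto simp: DERIV_deriv_iff_real_differentiable)

lemma deriv_tower_cmult:
  assumes "deriv_tower k g" shows "deriv_tower k (\<lambda>j x. c * g j x)"
  using assms unfolding deriv_tower_def by (auto intro: DERIV_cmult continuous_intros)

lemma deriv_tower_Cons:
  assumes "\<And>x. (f has_real_derivative g 0 x) (at x)" and "deriv_tower k g"
  shows "deriv_tower (Suc k) (case_nat f g)"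
proof -
  have "continuous_on UNIV f"
    using assms(1) by (meson DERIV_isCont continuous_at_imp_continuous_on)
  then show ?thesis
    using assms unfolding deriv_tower_def by (auto split: nat.split)
qed

lemma deriv_tower_radial_avg:
  assumes g: "deriv_tower k g" and \<nu>: "set_integrable lborel {0..1} \<nu>"
  shows "deriv_tower k (\<lambda>j. radial_avg (\<lambda>t. t ^ j * \<nu> t) (g j))"
  unfolding deriv_tower_def
proof (intro conjI allI impI)
  fix j x assume "j < k"
  with g have "\<And>x. (g j has_real_derivative g (Suc j) x) (at x)" "continuous_on UNIV (g (Suc j))"
    unfolding deriv_tower_def by auto
  from has_real_derivative_radial_avg[OF this set_integrable_power_mult[OF \<nu>]]
  show "(radial_avg (\<lambda>t. t ^ j * \<nu> t) (g j) has_real_derivative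
          radial_avg (\<lambda>t. t ^ Suc j * \<nu> t) (g (Suc j)) x) (at x)"
    by (simp add: mult.assoc)
next
  fix j assume "j \<le> k"
  with g have "continuous_on UNIV (g j)" unfolding deriv_tower_def by auto
  then show "continuous_on UNIV (radial_avg (\<lambda>t. t ^ j * \<nu> t) (g j))"
    by (rule continuous_on_radial_avg[OF _ set_integrable_power_mult[OF \<nu>]])
qed

section \<open>Convolution of the absolute value with a symmetric bump\<close>

lemma
  fixes g :: "real \<Rightarrow> real"
  assumes g: "continuous_on UNIV g" and supp: "\<And>y. g y \<noteq> 0 \<Longrightarrow> p \<le> y \<and> y \<le> q"
  shows integrable_supported_in_interval: "integrable lborel g"
    and integral_supported_in_interval: "(LINT y|lborel. g y) = integral {p..q} g"
proof -
  have eq: "(\<lambda>y. indicator {p..q} y *\<^sub>R g y) = g"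
    using supp by (force simp: fun_eq_iff indicator_def)
  have si: "set_integrable lborel {p..q} g"
    by (rule borel_integrable_atLeastAtMost'[OF continuous_on_subset[OF g]]) auto
  then show "integrable lborel g" unfolding set_integrable_def eq .
  show "(LINT y|lborel. g y) = integral {p..q} g"
    using set_borel_integral_eq_integral(2)[OF si] unfolding set_lebesgue_integral_def eq .
qed

lemma has_real_derivative_integral_from:
  fixes g :: "real \<Rightarrow> real"
  assumes g: "continuous_on UNIV g" and vanish: "\<And>y. y \<le> a + 1 \<Longrightarrow> g y = 0"
  shows "((\<lambda>x. integral {a..x} g) has_real_derivative g x) (at x)"
proof (cases "x > a")
  case True
  have "((\<lambda>x. integral {a..x} g) has_vector_derivative g x) (at x within {a..x+1})"
    by (rule integral_has_vector_derivative[OF continuous_on_subset[OF g]]) (use True in auto)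
  moreover have "at x within {a..x+1} = at x"
    by (rule at_within_interior) (use True in auto)
  ultimately show ?thesis by (simp add: has_real_derivative_iff_has_vector_derivative)
next
  case False
  have "eventually (\<lambda>y. y \<in> {..<a+1}) (nhds x)"
    by (rule eventually_nhds_in_open) (use False in auto)
  then have "eventually (\<lambda>y. integral {a..y} g = 0) (nhds x)"
    by eventually_elim (auto intro!: integral_unique[OF has_integral_is_0] vanish)
  then have "((\<lambda>x. integral {a..x} g) has_real_derivative 0) (at x) \<longleftrightarrow> ((\<lambda>x. 0) has_real_derivative 0) (at x)"
    by (intro DERIV_cong_ev) auto
  then show ?thesis using vanish False by simp
qed

locale mollifier =
  fixes u :: "real \<Rightarrow> real" and r :: real
  assumes continuous: "continuous_on UNIV u" and r_pos: "r > 0"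
    and support: "\<And>y. u y \<noteq> 0 \<Longrightarrow> \<bar>y\<bar> < r"
    and nonneg: "\<And>y. u y \<ge> 0" and even: "\<And>y. u (- y) = u y"
    and integral_eq_1: "(LINT y|lborel. u y) = 1"
begin

text \<open>The lower limit \<open>-r-1\<close> lies inside an interval where \<open>u\<close> vanishes, so that both integrals
  below are differentiable everywhere.\<close>
definition cdf :: "real \<Rightarrow> real" where
  "cdf x = integral {-r-1..x} u"

definition partial_moment :: "real \<Rightarrow> real" where
  "partial_moment x = integral {-r-1..x} (\<lambda>y. y * u y)"

lemma vanishes_outside: "y \<le> -r \<or> y \<ge> r \<Longrightarrow> u y = 0"
  using support[of y] by linarith

lemma support_interval: "u y \<noteq> 0 \<Longrightarrow> -r \<le> y \<and> y \<le> r"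
  using support[of y] by auto

lemma continuous_times_id: "continuous_on UNIV (\<lambda>y. y * u y)"
  using continuous by (intro continuous_intros)

lemma integrable_times_id: "integrable lborel (\<lambda>y. y * u y)"
  by (rule integrable_supported_in_interval[OF continuous_times_id, of "-r" r])
     (use support_interval in fastforce)

lemma first_moment_eq_0: "(LINT y|lborel. y * u y) = 0"
proof -
  have "(LINT y|lborel. y * u y) = \<bar>-1\<bar> *\<^sub>R (LINT y|lborel. (0 + -1 * y) * u (0 + -1 * y))"
    by (rule lborel_integral_real_affine) simp
  also have "\<dots> = - (LINT y|lborel. y * u y)" by (simp add: even)
  finally show ?thesis by simp
qed

lemma has_real_derivative_cdf: "(cdf has_real_derivative u x) (at x)"
  unfolding cdf_def[abs_def] by (rule has_real_derivative_integral_from[OF continuous])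
    (simp add: vanishes_outside)

lemma has_real_derivative_partial_moment: "(partial_moment has_real_derivative x * u x) (at x)"
  unfolding partial_moment_def[abs_def]
  by (rule has_real_derivative_integral_from[OF continuous_times_id]) (simp add: vanishes_outside)

lemma cdf_eq_0: "x \<le> -r \<Longrightarrow> cdf x = 0"
  unfolding cdf_def by (rule integral_unique[OF has_integral_is_0]) (simp add: vanishes_outside)

lemma cdf_eq_1: "x \<ge> r \<Longrightarrow> cdf x = 1"
  using integral_supported_in_interval[OF continuous, of "-r-1" x] vanishes_outside[of x] support
  by (force simp: cdf_def integral_eq_1)

lemma partial_moment_eq_0: "x \<ge> r \<Longrightarrow> partial_moment x = 0"
  using integral_supported_in_interval[OF continuous_times_id, of "-r-1" x] support
  by (force simp: partial_moment_def first_moment_eq_0)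

lemma mono_cdf: "mono cdf"
proof (rule monoI)
  fix x y :: real assume "x \<le> y"
  then show "cdf x \<le> cdf y"
    by (rule DERIV_nonneg_imp_nondecreasing) (use has_real_derivative_cdf nonneg in blast)
qed

lemma cdf_bounds: "0 \<le> cdf x" "cdf x \<le> 1"
  using monoD[OF mono_cdf, of "min x (-r)" x] monoD[OF mono_cdf, of x "max x r"]
    cdf_eq_0[of "min x (-r)"] cdf_eq_1[of "max x r"] by auto

lemma abs_conv_eq: "abs_conv u x = - x + 2 * (x * cdf x - partial_moment x)"
proof -
  have split: "\<bar>x - y\<bar> * u y = (y - x) * u y + 2 * (max (x - y) 0 * u y)" for y
    by (simp add: max_def algebra_simps)
  have cont: "continuous_on UNIV (\<lambda>y. max (x - y) 0 * u y)"
    using continuous by (intro continuous_intros)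
  have "(LINT y|lborel. max (x - y) 0 * u y) = x * cdf x - partial_moment x"
  proof (cases "x \<ge> -r-1")
    case True
    have "(LINT y|lborel. max (x - y) 0 * u y) = integral {-r-1..x} (\<lambda>y. max (x - y) 0 * u y)"
    proof (rule integral_supported_in_interval[OF cont])
      fix y assume "max (x - y) 0 * u y \<noteq> 0"
      then show "-r-1 \<le> y \<and> y \<le> x"
        using support_interval[of y] by (cases "y \<le> x") (auto simp: max_def)
    qed
    also have "\<dots> = integral {-r-1..x} (\<lambda>y. x * u y - y * u y)"
      by (rule integral_cong) (auto simp: max_def algebra_simps)
    also have "\<dots> = x * cdf x - partial_moment x"
      unfolding cdf_def partial_moment_def
      by (subst integral_diff) (auto intro!: integrable_continuous_interval continuous_intros
          continuous_on_subset[OF continuous] continuous_on_subset[OF continuous_times_id])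
    finally show ?thesis .
  next
    case False
    then have "(\<lambda>y. max (x - y) 0 * u y) = (\<lambda>y. 0)" "cdf x = 0" "partial_moment x = 0"
      using vanishes_outside by (auto simp: fun_eq_iff max_def cdf_def partial_moment_def)
    then show ?thesis by simp
  qed
  moreover have "integrable lborel (\<lambda>y. max (x - y) 0 * u y)"
    by (rule integrable_supported_in_interval[OF cont, of "-r" r])
       (use support_interval in fastforce)
  moreover have "integrable lborel u"
    by (rule integrable_supported_in_interval[OF continuous, of "-r" r]) (use support_interval in fastforce)
  ultimately show ?thesis
    unfolding abs_conv_def split using integrable_times_id first_moment_eq_0 integral_eq_1
    by (simp add: left_diff_distrib)
qed

lemma has_real_derivative_abs_conv: "(abs_conv u has_real_derivative 2 * cdf x - 1) (at x)"
proof -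
  have "((\<lambda>x. - x + 2 * (x * cdf x - partial_moment x)) has_real_derivative
       - 1 + 2 * ((1 * cdf x + x * u x) - x * u x)) (at x)"
    by (auto intro!: derivative_eq_intros has_real_derivative_cdf has_real_derivative_partial_moment)
  then show ?thesis by (simp add: abs_conv_eq[abs_def])
qed

lemma continuous_abs_conv: "continuous_on UNIV (abs_conv u)"
  using has_real_derivative_abs_conv by (meson DERIV_isCont continuous_at_imp_continuous_on)

lemma continuous_cdf: "continuous_on UNIV cdf"
  using has_real_derivative_cdf by (meson DERIV_isCont continuous_at_imp_continuous_on)

lemma abs_conv_even: "abs_conv u (- x) = abs_conv u x"
proof -
  have "abs_conv u x = \<bar>-1\<bar> *\<^sub>R (LBINT y. \<bar>x - (0 + -1 * y)\<bar> * u (0 + -1 * y))"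
    unfolding abs_conv_def by (rule lborel_integral_real_affine) simp
  also have "\<dots> = abs_conv u (- x)"
    unfolding abs_conv_def by (simp add: even abs_minus_commute add.commute)
  finally show ?thesis ..
qed

lemma convex_abs_conv: "convex_on UNIV (abs_conv u)"
  by (rule convex_on_realI[OF connected_UNIV has_real_derivative_abs_conv])
     (use monoD[OF mono_cdf] in auto)

lemma abs_conv_ge_abs_conv_0: "abs_conv u 0 \<le> abs_conv u x"
  using convex_onD[OF convex_abs_conv, of "1/2" x "-x"] by (simp add: abs_conv_even)

lemma abs_conv_0_pos: "abs_conv u 0 > 0"
proof -
  have int: "integrable lborel (\<lambda>y. \<bar>y\<bar> * u y)"
    by (rule integrable_supported_in_interval[of _ "-r" r])
       (use continuous support_interval in \<open>fastforce intro: continuous_intros\<close>)+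
  have "abs_conv u 0 \<noteq> 0"
  proof
    assume "abs_conv u 0 = 0"
    then have "AE y in lborel. \<bar>y\<bar> * u y = 0"
      using integral_nonneg_eq_0_iff_AE[OF int] nonneg by (simp add: abs_conv_def)
    then have "AE y in lborel. u y = 0"
      using AE_lborel_singleton[of 0] by eventually_elim simp
    then have "(LINT y|lborel. u y) = 0" by (rule integral_eq_zero_AE)
    then show False using integral_eq_1 by simp
  qed
  moreover have "abs_conv u 0 \<ge> 0"
    unfolding abs_conv_def by (intro integral_nonneg_AE AE_I2) (simp add: nonneg)
  ultimately show ?thesis by simp
qed

lemma abs_conv_eq_abs: "\<bar>x\<bar> \<ge> r \<Longrightarrow> abs_conv u x = \<bar>x\<bar>"
  using abs_conv_eq[of "\<bar>x\<bar>"] cdf_eq_1[of "\<bar>x\<bar>"] partial_moment_eq_0[of "\<bar>x\<bar>"]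
  by (cases "x \<ge> 0") (auto simp: abs_conv_even[of x, symmetric])

lemma deriv_tower_abs_conv:
  assumes "Ck n u"
  shows "deriv_tower (n + 2) (case_nat (abs_conv u) (case_nat (\<lambda>x. 2 * cdf x - 1) (\<lambda>j x. 2 * (deriv ^^ j) u x)))"
proof -
  have "deriv_tower n (\<lambda>j x. 2 * (deriv ^^ j) u x)"
    by (rule deriv_tower_cmult[OF Ck_imp_deriv_tower[OF assms]])
  then have "deriv_tower (Suc n) (case_nat (\<lambda>x. 2 * cdf x - 1) (\<lambda>j x. 2 * (deriv ^^ j) u x))"
    by (rule deriv_tower_Cons[rotated]) (auto intro!: derivative_eq_intros has_real_derivative_cdf)
  from deriv_tower_Cons[OF _ this, of "abs_conv u"] show ?thesis
    using has_real_derivative_abs_conv by simp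
qed

end

section \<open>Decay, square integrability and rescaling\<close>

lemma bounded_if_bounded_outside:
  fixes h :: "real \<Rightarrow> real"
  assumes h: "continuous_on UNIV h" and outside: "\<And>x. \<bar>x\<bar> \<ge> R \<Longrightarrow> \<bar>h x\<bar> \<le> B"
  obtains M where "\<And>x. \<bar>h x\<bar> \<le> M"
proof -
  have "compact (h ` {-R..R})"
    by (rule compact_continuous_image[OF continuous_on_subset[OF h]]) auto
  then have "bounded (h ` {-R..R})" by (rule compact_imp_bounded)
  then obtain M where M: "\<And>x. x \<in> {-R..R} \<Longrightarrow> \<bar>h x\<bar> \<le> M" unfolding bounded_iff by fastforce
  have "\<bar>h x\<bar> \<le> max M B" for x
  proof (cases "\<bar>x\<bar> \<ge> R")
    case False
    then have "x \<in> {-R..R}" by auto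
    then show ?thesis using M by fastforce
  qed (use outside in fastforce)
  then show ?thesis by (rule that)
qed

lemma bigo_inverse_if_decay:
  fixes G :: "real \<Rightarrow> real"
  assumes "\<And>s. \<bar>s\<bar> \<ge> R \<Longrightarrow> \<bar>G s\<bar> \<le> K / \<bar>s\<bar>"
  shows "G \<in> O[at_top](\<lambda>s. 1 / s)"
proof (rule bigoI[of _ K])
  show "eventually (\<lambda>s. norm (G s) \<le> K * norm (1 / s)) at_top"
    using eventually_ge_at_top[of "max R 0"]
  proof eventually_elim
    case (elim s)
    then show ?case using assms[of s] by (simp add: divide_inverse)
  qed
qed

lemma tendsto_0_at_infinity_if_decay:
  fixes G :: "real \<Rightarrow> real"
  assumes "\<And>s. \<bar>s\<bar> \<ge> R \<Longrightarrow> \<bar>G s\<bar> \<le> K / \<bar>s\<bar>"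
  shows "(G \<longlongrightarrow> 0) at_infinity"
proof (rule Lim_null_comparison)
  show "eventually (\<lambda>s. norm (G s) \<le> K * norm (inverse s)) at_infinity"
    unfolding eventually_at_infinity using assms by (auto simp: divide_inverse)
  show "((\<lambda>s::real. K * norm (inverse s)) \<longlongrightarrow> 0) at_infinity"
    by (intro tendsto_mult_right_zero tendsto_norm_zero) (rule Limits.tendsto_inverse_0)
qed

text \<open>Dominated by a multiple of the integrable function \<open>1 / (1 + s\<^sup>2)\<close>.\<close>
lemma integrable_square_if_decay:
  fixes G :: "real \<Rightarrow> real"
  assumes [measurable]: "G \<in> borel_measurable borel" and R: "R > 0"
    and bounded: "\<And>s. \<bar>G s\<bar> \<le> B" and decay: "\<And>s. \<bar>s\<bar> \<ge> R \<Longrightarrow> \<bar>G s\<bar> \<le> K / \<bar>s\<bar>"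
  shows "integrable lborel (\<lambda>s. (G s)\<^sup>2)"
proof -
  define C where "C = B\<^sup>2 * (1 + R\<^sup>2) + K\<^sup>2 * (1 + 1 / R\<^sup>2)"
  have "(G s)\<^sup>2 * (1 + s\<^sup>2) \<le> C" for s
  proof (cases "\<bar>s\<bar> \<le> R")
    case True
    have "(G s)\<^sup>2 \<le> B\<^sup>2" using bounded[of s] by (simp add: abs_le_square_iff[symmetric])
    moreover have "s\<^sup>2 \<le> R\<^sup>2" using True R by (simp add: abs_le_square_iff[symmetric])
    ultimately have "(G s)\<^sup>2 * (1 + s\<^sup>2) \<le> B\<^sup>2 * (1 + R\<^sup>2)" by (intro mult_mono) auto
    moreover have "0 \<le> K\<^sup>2 * (1 + 1 / R\<^sup>2)" by simp
    ultimately show ?thesis unfolding C_def by linarith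
  next
    case False
    then have s: "R\<^sup>2 \<le> s\<^sup>2" "s \<noteq> 0" using R by (auto simp: abs_le_square_iff[symmetric])
    have "\<bar>G s\<bar> \<le> \<bar>K / \<bar>s\<bar>\<bar>"
      using decay[of s] False abs_ge_self[of "K / \<bar>s\<bar>"] by linarith
    then have "(G s)\<^sup>2 \<le> (K / \<bar>s\<bar>)\<^sup>2" by (simp only: abs_le_square_iff)
    then have "(G s)\<^sup>2 * s\<^sup>2 \<le> K\<^sup>2" using s by (simp add: power_divide field_simps)
    moreover have "(G s)\<^sup>2 * (1 + s\<^sup>2) = ((G s)\<^sup>2 * s\<^sup>2) * (1 + 1 / s\<^sup>2)"
      using s by (simp add: field_simps)
    ultimately have "(G s)\<^sup>2 * (1 + s\<^sup>2) \<le> K\<^sup>2 * (1 + 1 / s\<^sup>2)"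
      by (metis mult_right_mono add_nonneg_nonneg zero_le_one zero_le_divide_1_iff zero_le_power2)
    also have "\<dots> \<le> K\<^sup>2 * (1 + 1 / R\<^sup>2)"
      using s R by (intro mult_left_mono add_left_mono divide_left_mono) auto
    moreover have "0 \<le> B\<^sup>2 * (1 + R\<^sup>2)" by simp
    ultimately show ?thesis unfolding C_def by linarith
  qed
  then have dom: "(G s)\<^sup>2 \<le> C * inverse (1 + s\<^sup>2)" for s
    by (simp add: field_simps add_pos_nonneg)
  have "integrable lborel (\<lambda>s::real. inverse (1 + s\<^sup>2))"
    using integrable_inverse_1_plus_square by (simp add: set_integrable_def einterval_def)
  then have "integrable lborel (\<lambda>s. C * inverse (1 + s\<^sup>2))" by simp
  then show ?thesis
    by (rule Bochner_Integration.integrable_bound) (use dom in \<open>auto intro: order_trans[OF _ abs_ge_self]\<close>)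
qed

lemma
  fixes G :: "real \<Rightarrow> real"
  assumes G: "integrable lborel (\<lambda>s. (G s)\<^sup>2)" and \<epsilon>: "\<epsilon> > 0"
  shows integrable_square_rescaled: "integrable lborel (\<lambda>s. (\<epsilon> * G (s / \<epsilon>))\<^sup>2)"
    and integral_square_rescaled:
      "(LINT s|lborel. (\<epsilon> * G (s / \<epsilon>))\<^sup>2) = \<epsilon> ^ 3 * (LINT s|lborel. (G s)\<^sup>2)"
proof -
  have "integrable lborel (\<lambda>s. (G (0 + (1 / \<epsilon>) * s))\<^sup>2)"
    using lborel_integrable_real_affine[OF G, of "1 / \<epsilon>" 0] \<epsilon> by simp
  then show "integrable lborel (\<lambda>s. (\<epsilon> * G (s / \<epsilon>))\<^sup>2)"
    by (simp add: power_mult_distrib)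
  have "(LINT s|lborel. (G (0 + (1 / \<epsilon>) * s))\<^sup>2)
      = \<bar>\<epsilon>\<bar> *\<^sub>R (LINT x|lborel. (G (0 + (1 / \<epsilon>) * (0 + \<epsilon> * x)))\<^sup>2)"
    by (rule lborel_integral_real_affine) (use \<epsilon> in simp)
  then have "(LINT s|lborel. (G (s / \<epsilon>))\<^sup>2) = \<epsilon> * (LINT s|lborel. (G s)\<^sup>2)"
    using \<epsilon> by simp
  then show "(LINT s|lborel. (\<epsilon> * G (s / \<epsilon>))\<^sup>2) = \<epsilon> ^ 3 * (LINT s|lborel. (G s)\<^sup>2)"
    by (simp add: power_mult_distrib power3_eq_cube power2_eq_square[of \<epsilon>])
qed

lemma L2_norm_rescaled_tendsto_0:
  fixes G :: "real \<Rightarrow> real"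
  assumes "integrable lborel (\<lambda>s. (G s)\<^sup>2)"
  shows "((\<lambda>\<epsilon>. sqrt (LINT s|lborel. (\<epsilon> * G (s / \<epsilon>))\<^sup>2)) \<longlongrightarrow> 0) (at_right 0)"
proof -
  have "((\<lambda>\<epsilon>::real. sqrt (\<epsilon> ^ 3 * (LINT s|lborel. (G s)\<^sup>2))) \<longlongrightarrow> 0) (at_right 0)"
    by (rule tendsto_eq_intros refl | simp)+
  moreover have "eventually (\<lambda>\<epsilon>. sqrt (\<epsilon> ^ 3 * (LINT s|lborel. (G s)\<^sup>2))
      = sqrt (LINT s|lborel. (\<epsilon> * G (s / \<epsilon>))\<^sup>2)) (at_right 0)"
    using eventually_at_right_less[of "0::real"]
    by eventually_elim (simp add: integral_square_rescaled[OF assms])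
  ultimately show ?thesis by (rule Lim_transform_eventually)
qed

lemma rescaled_tendsto_0:
  fixes G :: "real \<Rightarrow> real"
  assumes "\<And>s. \<bar>G s\<bar> \<le> B"
  shows "((\<lambda>\<epsilon>. \<epsilon> * G (s / \<epsilon>)) \<longlongrightarrow> 0) (at_right 0)"
proof (rule Lim_null_comparison)
  show "eventually (\<lambda>\<epsilon>. norm (\<epsilon> * G (s / \<epsilon>)) \<le> \<epsilon> * B) (at_right 0)"
    using eventually_at_right_less[of "0::real"]
    by eventually_elim (use assms in \<open>simp add: abs_mult mult_left_mono\<close>)
  show "((\<lambda>\<epsilon>. \<epsilon> * B) \<longlongrightarrow> 0) (at_right 0)"
    by (rule tendsto_mult_left_zero) (rule tendsto_ident_at)
qed

section \<open>The radial profile\<close>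

lemma has_real_derivative_even_at_0:
  fixes f :: "real \<Rightarrow> real"
  assumes even: "\<And>s. f (- s) = f s" and der: "(f has_real_derivative D) (at 0)"
  shows "D = 0"
proof -
  have "((\<lambda>s. f (- s)) has_real_derivative D * (- 1)) (at 0)"
    by (rule DERIV_chain2[of f, OF _ DERIV_minus[OF DERIV_ident]]) (use der in simp)
  then have "(f has_real_derivative - D) (at 0)" by (simp add: even)
  from this der have "- D = D" by (rule DERIV_unique)
  then show ?thesis by simp
qed

lemma abs_conv_rescale:
  assumes \<epsilon>: "\<epsilon> > 0"
  shows "abs_conv (\<lambda>x. u (x / \<epsilon>) / \<epsilon>) x = \<epsilon> * abs_conv u (x / \<epsilon>)"
proof -
  have "abs_conv (\<lambda>x. u (x / \<epsilon>) / \<epsilon>) x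
      = \<bar>\<epsilon>\<bar> *\<^sub>R (LBINT z. \<bar>x - (0 + \<epsilon> * z)\<bar> * (u ((0 + \<epsilon> * z) / \<epsilon>) / \<epsilon>))"
    unfolding abs_conv_def by (rule lborel_integral_real_affine) (use \<epsilon> in simp)
  also have "(\<lambda>z. \<bar>x - (0 + \<epsilon> * z)\<bar> * (u ((0 + \<epsilon> * z) / \<epsilon>) / \<epsilon>)) = (\<lambda>z. \<bar>x / \<epsilon> - z\<bar> * u z)"
  proof
    fix z
    have "x - \<epsilon> * z = \<epsilon> * (x / \<epsilon> - z)" using \<epsilon> by (simp add: field_simps)
    then show "\<bar>x - (0 + \<epsilon> * z)\<bar> * (u ((0 + \<epsilon> * z) / \<epsilon>) / \<epsilon>) = \<bar>x / \<epsilon> - z\<bar> * u z"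
      using \<epsilon> by (simp add: abs_mult)
  qed
  finally show ?thesis using \<epsilon> by (simp add: abs_conv_def)
qed

lemma I_op_rescale: "I_op d (\<lambda>x. \<epsilon> * f (x / \<epsilon>)) s = \<epsilon> * I_op d f (s / \<epsilon>)"
  by (simp add: I_op_def mult.assoc)

locale radial_profile = mollifier +
  fixes d :: nat
  assumes dim: "d \<ge> 2"
begin

definition F :: "real \<Rightarrow> real" where
  "F = I_op d (abs_conv u)"

definition defect :: "real \<Rightarrow> real" where
  "defect s = F s - C_const d * \<bar>s\<bar>"

lemma F_eq: "F s = c_const d * radial_avg (radial_weight d) (abs_conv u) s"
  by (simp add: F_def I_op_eq_radial_avg)

lemma F_even: "F (- s) = F s"
  by (simp add: F_def I_op_def abs_conv_even[of "_ * s", symmetric])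

lemma Ck_F:
  assumes "Ck n u" shows "Ck (n + 2) F"
proof -
  have "deriv_tower (n + 2) (\<lambda>j s. c_const d * radial_avg (\<lambda>t. t ^ j * radial_weight d t)
      (case_nat (abs_conv u) (case_nat (\<lambda>x. 2 * cdf x - 1) (\<lambda>j x. 2 * (deriv ^^ j) u x)) j) s)"
    by (intro deriv_tower_cmult deriv_tower_radial_avg deriv_tower_abs_conv assms
        set_integrable_radial_weight dim)
  from deriv_tower_imp_Ck[OF this] show ?thesis by (simp add: F_eq[abs_def])
qed

lemma has_real_derivative_F:
  "(F has_real_derivative c_const d * radial_avg (\<lambda>t. t * radial_weight d t) (\<lambda>x. 2 * cdf x - 1) s) (at s)"
  unfolding F_eq[abs_def]
  by (intro DERIV_cmult has_real_derivative_radial_avg has_real_derivative_abs_conv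
      set_integrable_radial_weight dim continuous_intros continuous_cdf)

lemma deriv_F: "deriv F = (\<lambda>s. c_const d * radial_avg (\<lambda>t. t * radial_weight d t) (\<lambda>x. 2 * cdf x - 1) s)"
  using has_real_derivative_F by (auto simp: fun_eq_iff intro: DERIV_imp_deriv)

lemma continuous_deriv_F: "continuous_on UNIV (deriv F)"
  unfolding deriv_F
  by (intro continuous_intros continuous_on_radial_avg continuous_cdf
      set_integrable_times_radial_weight dim)

lemma bounded_deriv_F: "bounded (range (deriv F))"
proof -
  have "\<bar>radial_avg (\<lambda>t. t * radial_weight d t) (\<lambda>x. 2 * cdf x - 1) s\<bar>
      \<le> 1 * (LINT t:{0..1}|lborel. t * radial_weight d t)" for s
    using cdf_bounds
    by (intro abs_radial_avg_le continuous_intros continuous_cdf set_integrable_times_radial_weight dim)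
       (auto simp: radial_weight_nonneg abs_le_iff)
  then show ?thesis
    unfolding deriv_F bounded_iff using c_const_pos[OF dim]
    by (auto simp: abs_mult intro!: exI[of _ "c_const d * (LINT t:{0..1}|lborel. t * radial_weight d t)"])
qed

lemma mono_deriv_F: "s \<le> s' \<Longrightarrow> deriv F s \<le> deriv F s'"
  unfolding deriv_F using c_const_pos[OF dim] monoD[OF mono_cdf]
  by (intro mult_left_mono radial_avg_mono continuous_intros continuous_cdf
      set_integrable_times_radial_weight dim monoI)
     (auto simp: radial_weight_nonneg)

lemma convex_F: "convex_on UNIV F"
  by (rule convex_on_realI[OF connected_UNIV has_real_derivative_F])
     (use mono_deriv_F in \<open>auto simp: deriv_F\<close>)

lemma F_pos: "F s > 0"
proof -
  have "abs_conv u 0 * (LINT t:{0..1}|lborel. radial_weight d t) \<le> radial_avg (radial_weight d) (abs_conv u) s"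
    by (intro radial_avg_ge continuous_abs_conv set_integrable_radial_weight dim abs_conv_ge_abs_conv_0)
       (simp add: radial_weight_nonneg)
  moreover have "abs_conv u 0 * (LINT t:{0..1}|lborel. radial_weight d t) > 0"
    using abs_conv_0_pos set_integral_radial_weight_pos[OF dim] by simp
  ultimately show ?thesis using c_const_pos[OF dim] by (simp add: F_eq)
qed

lemma deriv_F_0: "deriv F 0 = 0"
  using has_real_derivative_even_at_0[OF F_even has_real_derivative_F] by (simp add: deriv_F)

lemma continuous_defect: "continuous_on UNIV defect"
  unfolding defect_def[abs_def] F_eq[abs_def]
  by (intro continuous_intros continuous_on_radial_avg continuous_abs_conv set_integrable_radial_weight dim)

lemma defect_even: "defect (- s) = defect s"
  by (simp add: defect_def F_even)

lemma defect_eq: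
  assumes s: "s \<ge> 0"
  shows "defect s = c_const d * radial_avg (radial_weight d) (\<lambda>x. abs_conv u x - \<bar>x\<bar>) s"
proof -
  have "radial_avg (radial_weight d) (\<lambda>x. abs_conv u x - \<bar>x\<bar>) s
      = (LINT t:{0..1}|lborel. abs_conv u (t * s) * radial_weight d t - s * (t * radial_weight d t))"
    unfolding radial_avg_def by (rule set_lebesgue_integral_cong) (use s in \<open>auto simp: algebra_simps\<close>)
  also have "\<dots> = radial_avg (radial_weight d) (abs_conv u) s - s / (real d - 1)"
    using set_integrable_radial_avg[OF continuous_abs_conv set_integrable_radial_weight[OF dim]]
      set_integrable_times_radial_weight[OF dim]
    by (simp add: set_integral_diff(2) set_integral_times_radial_weight[OF dim] radial_avg_def)
  finally show ?thesis
    using s by (simp add: defect_def F_eq C_const_eq[OF dim] right_diff_distrib)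
qed

lemma defect_decay:
  obtains K where "K \<ge> 0" "\<And>s. \<bar>s\<bar> \<ge> 2 * r \<Longrightarrow> \<bar>defect s\<bar> \<le> K / \<bar>s\<bar>"
proof -
  have h: "continuous_on UNIV (\<lambda>x. abs_conv u x - \<bar>x\<bar>)"
    by (intro continuous_intros continuous_abs_conv)
  obtain M where M: "\<And>x. \<bar>abs_conv u x - \<bar>x\<bar>\<bar> \<le> M"
    using bounded_if_bounded_outside[OF h, of r 0] by (auto simp: abs_conv_eq_abs)
  have M0: "M \<ge> 0" using M[of 0] by linarith
  have pos: "\<bar>defect s\<bar> \<le> c_const d * (2 * M * r) / s" if s: "s \<ge> 2 * r" for s
  proof -
    have "\<bar>radial_avg (radial_weight d) (\<lambda>x. abs_conv u x - \<bar>x\<bar>) s\<bar> \<le> 2 * M * r / s"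
      using r_pos s by (intro abs_radial_avg_radial_weight_le[OF dim h M]) (auto simp: abs_conv_eq_abs)
    then show ?thesis
      using s r_pos c_const_pos[OF dim] defect_eq[of s]
      by (simp add: abs_mult mult_left_mono times_divide_eq_right[symmetric] del: times_divide_eq_right)
  qed
  show ?thesis
  proof (rule that[of "c_const d * (2 * M * r)"])
    show "0 \<le> c_const d * (2 * M * r)" using c_const_pos[OF dim] M0 r_pos by simp
    fix s :: real assume "\<bar>s\<bar> \<ge> 2 * r"
    then show "\<bar>defect s\<bar> \<le> c_const d * (2 * M * r) / \<bar>s\<bar>"
      using pos[of s] pos[of "- s"] defect_even[of s] by (cases "s \<ge> 0") auto
  qed
qed

lemma defect_bounded:
  obtains B where "\<And>s. \<bar>defect s\<bar> \<le> B"
proof -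
  obtain K where K: "K \<ge> 0" "\<And>s. \<bar>s\<bar> \<ge> 2 * r \<Longrightarrow> \<bar>defect s\<bar> \<le> K / \<bar>s\<bar>"
    using defect_decay by blast
  have "\<bar>defect s\<bar> \<le> K / (2 * r)" if s: "\<bar>s\<bar> \<ge> 2 * r" for s
  proof -
    have "K / \<bar>s\<bar> \<le> K / (2 * r)"
      using s r_pos K(1) by (intro divide_left_mono) auto
    then show ?thesis using K(2)[OF s] by linarith
  qed
  from bounded_if_bounded_outside[OF continuous_defect this] that show ?thesis by blast
qed

lemma integrable_defect_square: "integrable lborel (\<lambda>s. (defect s)\<^sup>2)"
proof -
  obtain K where "\<And>s. \<bar>s\<bar> \<ge> 2 * r \<Longrightarrow> \<bar>defect s\<bar> \<le> K / \<bar>s\<bar>" using defect_decay by blast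
  moreover obtain B where "\<And>s. \<bar>defect s\<bar> \<le> B" using defect_bounded by blast
  ultimately show ?thesis
    using r_pos borel_measurable_continuous_onI[OF continuous_defect]
    by (intro integrable_square_if_decay[of _ "2 * r"]) auto
qed

lemma rescaled_defect:
  assumes \<epsilon>: "\<epsilon> > 0"
  shows "I_op d (abs_conv (\<lambda>x. u (x / \<epsilon>) / \<epsilon>)) s - C_const d * \<bar>s\<bar> = \<epsilon> * defect (s / \<epsilon>)"
proof -
  have "abs_conv (\<lambda>x. u (x / \<epsilon>) / \<epsilon>) = (\<lambda>x. \<epsilon> * abs_conv u (x / \<epsilon>))"
    using abs_conv_rescale[OF \<epsilon>] by (rule ext)
  then have "I_op d (abs_conv (\<lambda>x. u (x / \<epsilon>) / \<epsilon>)) s = \<epsilon> * F (s / \<epsilon>)"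
    by (simp add: I_op_rescale F_def)
  moreover have "\<bar>s\<bar> = \<epsilon> * \<bar>s / \<epsilon>\<bar>" using \<epsilon> by (simp add: abs_divide)
  ultimately show ?thesis using \<epsilon> by (simp add: defect_def algebra_simps)
qed

lemma integrable_rescaled_defect_square:
  assumes "\<epsilon> > 0"
  shows "integrable lborel (\<lambda>s. (I_op d (abs_conv (\<lambda>x. u (x / \<epsilon>) / \<epsilon>)) s - C_const d * \<bar>s\<bar>)\<^sup>2)"
  using integrable_square_rescaled[OF integrable_defect_square assms] by (simp add: rescaled_defect[OF assms])

lemma rescaled_L2_tendsto_0:
  "((\<lambda>\<epsilon>. sqrt (LINT s|lborel. (I_op d (abs_conv (\<lambda>x. u (x / \<epsilon>) / \<epsilon>)) s - C_const d * \<bar>s\<bar>)\<^sup>2))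
     \<longlongrightarrow> 0) (at_right 0)"
proof (rule Lim_transform_eventually[OF L2_norm_rescaled_tendsto_0[OF integrable_defect_square]])
  show "eventually (\<lambda>\<epsilon>. sqrt (LINT s|lborel. (\<epsilon> * defect (s / \<epsilon>))\<^sup>2)
      = sqrt (LINT s|lborel. (I_op d (abs_conv (\<lambda>x. u (x / \<epsilon>) / \<epsilon>)) s - C_const d * \<bar>s\<bar>)\<^sup>2)) (at_right 0)"
    using eventually_at_right_less[of "0::real"] by eventually_elim (simp add: rescaled_defect)
qed

lemma rescaled_tendsto_abs:
  "((\<lambda>\<epsilon>. I_op d (abs_conv (\<lambda>x. u (x / \<epsilon>) / \<epsilon>)) s) \<longlongrightarrow> C_const d * \<bar>s\<bar>) (at_right 0)"
proof -
  obtain B where "\<And>s. \<bar>defect s\<bar> \<le> B" using defect_bounded by blast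
  from tendsto_add[OF rescaled_tendsto_0[OF this] tendsto_const[of "C_const d * \<bar>s\<bar>"]]
  have "((\<lambda>\<epsilon>. \<epsilon> * defect (s / \<epsilon>) + C_const d * \<bar>s\<bar>) \<longlongrightarrow> C_const d * \<bar>s\<bar>) (at_right 0)"
    by simp
  moreover have "eventually (\<lambda>\<epsilon>. \<epsilon> * defect (s / \<epsilon>) + C_const d * \<bar>s\<bar>
      = I_op d (abs_conv (\<lambda>x. u (x / \<epsilon>) / \<epsilon>)) s) (at_right 0)"
    using eventually_at_right_less[of "0::real"]
  proof eventually_elim
    case (elim \<epsilon>)
    then show ?case using rescaled_defect[of \<epsilon> s] by simp
  qed
  ultimately show ?thesis by (rule Lim_transform_eventually)
qed

end

lemma U_class_mollifier:
  assumes "u \<in> U_class n"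
  obtains r where "mollifier u r"
proof -
  from assms have Ck: "Ck n u" and compact: "compact (closure {x. u x \<noteq> 0})"
    and props: "\<And>x. u x \<ge> 0" "\<And>x. u (- x) = u x" "(LINT x|lborel. u x) = 1"
    unfolding U_class_def by blast+
  obtain r where "r > 0" and r: "\<And>x. x \<in> closure {x. u x \<noteq> 0} \<Longrightarrow> \<bar>x\<bar> < r"
    using compact_imp_bounded[OF compact] unfolding bounded_pos_less by auto
  have "continuous_on UNIV u" using Ck unfolding Ck_def by (metis funpow_0 le0)
  moreover have "\<bar>y\<bar> < r" if "u y \<noteq> 0" for y
    using r[of y] closure_subset[of "{x. u x \<noteq> 0}"] that by blast
  ultimately show ?thesis
    using \<open>r > 0\<close> props by (intro that) (unfold_locales; auto)
qed
theorem mainTheorem8: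
  fixes n d :: nat and u :: "real \<Rightarrow> real" and F :: "real \<Rightarrow> real"
  assumes "d \<ge> 2" and "u \<in> U_class n"
    and "F = I_op d (abs_conv u)"
  shows "(\<forall>s. F (- s) = F s)
    \<and> convex_on UNIV F
    \<and> (\<forall>s. F s > 0)
    \<and> Ck (n + 2) F
    \<and> (\<lambda>s. F s - C_const d * \<bar>s\<bar>) \<in> O[at_top](\<lambda>s. 1 / s)
    \<and> continuous_on UNIV (\<lambda>s. F s - C_const d * \<bar>s\<bar>)
    \<and> ((\<lambda>s. F s - C_const d * \<bar>s\<bar>) \<longlongrightarrow> 0) at_infinity
    \<and> integrable lborel (\<lambda>s. (F s - C_const d * \<bar>s\<bar>)\<^sup>2)
    \<and> bounded (range (deriv F)) \<and> continuous_on UNIV (deriv F) \<and> deriv F 0 = 0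
    \<and> (\<forall>\<epsilon>>0. integrable lborel
          (\<lambda>s. (I_op d (abs_conv (\<lambda>x. u (x / \<epsilon>) / \<epsilon>)) s - C_const d * \<bar>s\<bar>)\<^sup>2))
    \<and> ((\<lambda>\<epsilon>. sqrt (LINT s|lborel.
          (I_op d (abs_conv (\<lambda>x. u (x / \<epsilon>) / \<epsilon>)) s - C_const d * \<bar>s\<bar>)\<^sup>2))
        \<longlongrightarrow> 0) (at_right 0)
    \<and> (\<forall>s. ((\<lambda>\<epsilon>. I_op d (abs_conv (\<lambda>x. u (x / \<epsilon>) / \<epsilon>)) s)
        \<longlongrightarrow> C_const d * \<bar>s\<bar>) (at_right 0))"
proof -
  obtain r where "mollifier u r" using assms(2) by (rule U_class_mollifier)
  then interpret P: radial_profile u r d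
    using assms(1) by (simp add: radial_profile_def radial_profile_axioms_def)
  have F: "F = P.F" using assms(3) by (simp add: P.F_def)
  obtain K where decay: "\<And>s. \<bar>s\<bar> \<ge> 2 * r \<Longrightarrow> \<bar>P.defect s\<bar> \<le> K / \<bar>s\<bar>"
    using P.defect_decay by blast
  note defect_facts = bigo_inverse_if_decay[OF decay] P.continuous_defect
    tendsto_0_at_infinity_if_decay[OF decay] P.integrable_defect_square
  have "Ck n u" using assms(2) by (simp add: U_class_def)
  then show ?thesis
    unfolding F using defect_facts[unfolded P.defect_def[abs_def]]
    by (intro conjI allI impI P.F_even P.convex_F P.F_pos P.Ck_F P.bounded_deriv_F
        P.continuous_deriv_F P.deriv_F_0 P.integrable_rescaled_defect_square
        P.rescaled_L2_tendsto_0 P.rescaled_tendsto_abs) simp_all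
qed

end
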